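(* Let $\mathbf r=\binom{r_1}{r_2}\in\mathbb Q^2$ and let $a,b,d\in\mathbb Z$ with $0\le b<a$ and $d\ge1$. Then for $\tau\in\mathbb H$, $$\varpi_{\mathbf r}\Big(\frac{a\tau+b}{d}\Big)=\prod_{j=0}^{a-1}\prod_{\ell=0}^{d-1}\varpi_{M^{-1}\binom{j+r_1}{\ell+r_2}}(\tau),\qquad M=\begin{pmatrix}a&b\\0&d\end{pmatrix}.$$
   Context: $e(z)=e^{2\pi iz}$; $\mathbb H$ the upper half plane; $\varpi(z,\tau)=\prod_{k\ge0}(1-e(z+k\tau))$, and for $\mathbf s=\binom{s_1}{s_2}\in\mathbb R^2$, $\varpi_{\mathbf s}(\tau)=\varpi(s_2\tau-s_1,\tau)$. *)

theory Defs
  imports "HOL-Analysis.Analysis"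
begin

definition e :: "complex \<Rightarrow> complex" where
  "e z = exp (2 * of_real pi * \<i> * z)"

definition varpi :: "complex \<Rightarrow> complex \<Rightarrow> complex" where
  "varpi z \<tau> = (\<Prod>k. 1 - e (z + of_nat k * \<tau>))"

definition varpi_s :: "real^2 \<Rightarrow> complex \<Rightarrow> complex" where
  "varpi_s s \<tau> = varpi (of_real (s $ 2) * \<tau> - of_real (s $ 1)) \<tau>"

definition matM :: "int \<Rightarrow> int \<Rightarrow> int \<Rightarrow> real^2^2" where
  "matM a b d = vector [vector [of_int a, of_int b], vector [0, of_int d]]"

end

theory Submission imports Defs "HOL-Computational_Algebra.Polynomial" begin

text \<open>Put \<open>\<tau>' = (a\<tau> + b)/d\<close> and \<open>z\<^sub>j\<^sub>l = ((l + y)/d)\<tau> - ((j + x)/a - b(l + y)/(ad))\<close>.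
  For \<open>k = l + md\<close> and \<open>w = z\<^sub>0\<^sub>l + m\<tau>\<close>, the number \<open>aw\<close> differs from \<open>y\<tau>' - x + k\<tau>'\<close> by the
  integer \<open>mb\<close>, and \<open>z\<^sub>j\<^sub>l = z\<^sub>0\<^sub>l - j/a\<close>; so factoring \<open>1 - Y\<^sup>a\<close> over the \<open>a\<close>-th roots of unity turns the
  \<open>k\<close>-th factor of \<open>\<varpi>(y\<tau>' - x, \<tau>')\<close> into \<open>\<Prod>\<^bsub>j<a\<^esub> (1 - e(z\<^sub>j\<^sub>l + m\<tau>))\<close>. Hence the first \<open>Nd\<close>
  factors of the left side are the first \<open>N\<close> factors of all the \<open>\<varpi>(z\<^sub>j\<^sub>l, \<tau>)\<close>; let \<open>N \<rightarrow> \<infinity>\<close>.\<close>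

lemma e_add: "e (x + y) = e x * e y"
  by (simp add: e_def distrib_left exp_add)

lemma e_of_int: "e (of_int n) = 1"
  unfolding e_def using exp_integer_2pi[of "of_int n"] by (simp add: mult_ac)

lemma e_add_of_int: "e (z + of_int n) = e z"
  by (simp add: e_add e_of_int)

lemma e_of_nat_mult: "e (of_nat n * z) = e z ^ n"
  unfolding e_def by (simp add: exp_of_nat_mult[symmetric] mult_ac)

lemma e_of_real: "e (of_real x) = cis (2 * pi * x)"
  by (simp add: e_def cis_conv_exp mult_ac)

lemma e_diff_of_real: "e (z - of_real t) = e z * cis (- 2 * pi * t)"
  using e_add[of z "of_real (- t)"] e_of_real[of "- t"] by simp

lemma norm_e: "norm (e z) = exp (- 2 * pi * Im z)"
  unfolding e_def by simp

lemma prod_one_minus_mult_roots_unity: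
  assumes "n > 0"
  shows "(\<Prod>j<n. 1 - y * cis (- 2 * pi * real j / real n)) = 1 - y ^ n"
proof -
  define p where "p = (\<Prod>j<n. [:1, - cis (- 2 * pi * real j / real n):])"
  define q :: "complex poly" where "q = 1 - monom 1 n"
  define A where "A = insert 0 {z::complex. z ^ n = 1}"
  have poly_p: "poly p x = (\<Prod>j<n. 1 - x * cis (- 2 * pi * real j / real n))" for x
    by (simp add: p_def poly_prod mult_ac)
  have poly_q: "poly q x = 1 - x ^ n" for x
    by (simp add: q_def poly_monom)
  have card_A: "card A = Suc n"
    using assms unfolding A_def
    by (subst card_insert_disjoint) (auto simp: finite_roots_unity card_roots_unity_eq power_0_left)
  have "degree p \<le> (\<Sum>j<n. (degree \<circ> (\<lambda>j. [:1, - cis (- 2 * pi * real j / real n):])) j)"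
    unfolding p_def by (rule degree_prod_sum_le) simp
  also have "\<dots> \<le> (\<Sum>j<n. 1)"
    by (intro sum_mono) auto
  finally have degree_p: "degree p \<le> n"
    by simp
  have degree_q: "degree q \<le> n"
    unfolding q_def by (metis degree_diff_le degree_monom_le degree_1 le0)
  have "poly p x = poly q x" if "x \<in> A" for x
  proof (cases "x = 0")
    case False
    with that have root: "x ^ n = 1"
      by (auto simp: A_def)
    then obtain k where k: "k < n" "x = cis (2 * pi * real k / real n)"
      using Complex.bij_betw_roots_unity[OF assms] unfolding bij_betw_def by auto
    then have "x * cis (- 2 * pi * real k / real n) = 1"
      by (simp add: cis_mult)
    with k have "poly p x = 0"
      unfolding poly_p by (intro prod_zero bexI[of _ k]) auto
    with root show ?thesis
      by (simp add: poly_q)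
  qed (use assms in \<open>simp add: poly_p poly_q\<close>)
  then have "p = q"
    using card_A degree_p degree_q by (intro poly_eqI_degree[of A]) auto
  then show ?thesis
    using poly_p poly_q by metis
qed

lemma prod_one_minus_e_shifts:
  assumes "n > 0"
  shows "(\<Prod>j<n. 1 - e (w - of_real (real j / real n))) = 1 - e (of_nat n * w)"
  using prod_one_minus_mult_roots_unity[OF assms, of "e w"]
  by (simp only: e_diff_of_real e_of_nat_mult) (simp add: mult_ac)

lemma prod_lessThan_mult_split:
  fixes f :: "nat \<Rightarrow> 'a::comm_monoid_mult"
  shows "(\<Prod>l<d. \<Prod>m<N. f (l + m * d)) = (\<Prod>k<N * d. f k)"
proof (induction N)
  case 0
  then show ?case by simp
next
  case (Suc N)
  have "(\<Prod>k<Suc N * d. f k) = (\<Prod>k\<in>{0..<N * d}. f k) * (\<Prod>k\<in>{N * d..<N * d + d}. f k)"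
    by (subst prod.atLeastLessThan_concat) (auto simp: add.commute atLeast0LessThan)
  also have "(\<Prod>k\<in>{N * d..<N * d + d}. f k) = (\<Prod>l\<in>{0..<d}. f (l + N * d))"
    using prod.shift_bounds_nat_ivl[of f 0 "N * d" d] by (simp add: add.commute)
  finally show ?case
    using Suc.IH by (simp add: prod.distrib atLeast0LessThan mult.commute)
qed

lemma varpi_partial_products_tendsto:
  assumes "Im \<tau> > 0"
  shows "(\<lambda>n. \<Prod>k<n. 1 - e (z + of_nat k * \<tau>)) \<longlonglongrightarrow> varpi z \<tau>"
proof -
  define f where "f k = 1 - e (z + of_nat k * \<tau>)" for k :: nat
  have "norm (f k - 1) = exp (- 2 * pi * Im z) * exp (- 2 * pi * Im \<tau>) ^ k" for k
    by (simp add: f_def norm_e exp_of_nat_mult[symmetric] algebra_simps exp_add[symmetric])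
  moreover have "summable (\<lambda>k. exp (- 2 * pi * Im z) * exp (- 2 * pi * Im \<tau>) ^ k)"
    using assms by (intro summable_mult summable_geometric) auto
  ultimately have "convergent_prod f"
    by (simp add: summable_imp_abs_convergent_prod abs_convergent_prod_imp_convergent_prod)
  then have "(\<lambda>n. \<Prod>k<Suc n. f k) \<longlonglongrightarrow> prodinf f"
    by (simp add: convergent_prod_LIMSEQ lessThan_Suc_atMost)
  then show ?thesis
    unfolding f_def varpi_def by (rule filterlim_sequentially_Suc[THEN iffD1])
qed

lemma one_minus_e_transformed_factor:
  fixes a d :: nat and b :: int and x y :: real and \<tau> :: complex
  assumes "a > 0" "d > 0"
  defines "\<tau>' \<equiv> (of_nat a * \<tau> + of_int b) / of_nat d"
  shows "1 - e (of_real y * \<tau>' - of_real x + of_nat (l + m * d) * \<tau>') =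
    (\<Prod>j<a. 1 - e (of_real ((real l + y) / real d) * \<tau>
      - of_real ((real j + x) / real a - of_int b * (real l + y) / (real a * real d))
      + of_nat m * \<tau>))"
proof -
  define w where "w = of_real ((real l + y) / real d) * \<tau>
      - of_real (x / real a - of_int b * (real l + y) / (real a * real d)) + of_nat m * \<tau>"
  have "of_nat a * w + of_int (int m * b) = of_real y * \<tau>' - of_real x + of_nat (l + m * d) * \<tau>'"
    using assms by (simp add: w_def \<tau>'_def field_simps)
  then have "e (of_nat a * w) = e (of_real y * \<tau>' - of_real x + of_nat (l + m * d) * \<tau>')"
    by (metis e_add_of_int)
  moreover have "of_real ((real l + y) / real d) * \<tau>
      - of_real ((real j + x) / real a - of_int b * (real l + y) / (real a * real d))
      + of_nat m * \<tau> = w - of_real (real j / real a)" for j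
    using assms by (simp add: w_def field_simps)
  ultimately show ?thesis
    using prod_one_minus_e_shifts[OF \<open>a > 0\<close>, of w] by simp
qed

lemma varpi_transform_eq_prod:
  fixes a d :: nat and b :: int and x y :: real and \<tau> :: complex
  assumes "a > 0" "d > 0" "Im \<tau> > 0"
  defines "\<tau>' \<equiv> (of_nat a * \<tau> + of_int b) / of_nat d"
  shows "varpi (of_real y * \<tau>' - of_real x) \<tau>' =
    (\<Prod>j<a. \<Prod>l<d. varpi (of_real ((real l + y) / real d) * \<tau>
      - of_real ((real j + x) / real a - of_int b * (real l + y) / (real a * real d))) \<tau>)"
proof -
  define z where "z j l = of_real ((real l + y) / real d) * \<tau>
      - of_real ((real j + x) / real a - of_int b * (real l + y) / (real a * real d))" for j l :: nat
  define f where "f k = 1 - e (of_real y * \<tau>' - of_real x + of_nat k * \<tau>')" for k :: nat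
  have "Im \<tau>' > 0"
    using assms by (simp add: \<tau>'_def Im_divide_of_real[of _ "of_nat d", simplified])
  then have "(\<lambda>N. \<Prod>k<N. f k) \<longlonglongrightarrow> varpi (of_real y * \<tau>' - of_real x) \<tau>'"
    unfolding f_def by (rule varpi_partial_products_tendsto)
  moreover have "strict_mono (\<lambda>N. N * d)"
    using assms by (intro strict_monoI) auto
  ultimately have lim_lhs: "(\<lambda>N. \<Prod>k<N * d. f k) \<longlonglongrightarrow> varpi (of_real y * \<tau>' - of_real x) \<tau>'"
    using LIMSEQ_subseq_LIMSEQ unfolding o_def by blast
  have "(\<Prod>j<a. \<Prod>l<d. \<Prod>m<N. 1 - e (z j l + of_nat m * \<tau>)) = (\<Prod>k<N * d. f k)" for N
  proof -
    have "(\<Prod>j<a. \<Prod>l<d. \<Prod>m<N. 1 - e (z j l + of_nat m * \<tau>))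
        = (\<Prod>l<d. \<Prod>m<N. \<Prod>j<a. 1 - e (z j l + of_nat m * \<tau>))"
      by (subst prod.swap) (intro prod.cong refl prod.swap)
    also have "\<dots> = (\<Prod>l<d. \<Prod>m<N. f (l + m * d))"
      using one_minus_e_transformed_factor[OF \<open>a > 0\<close> \<open>d > 0\<close>]
      by (simp add: f_def z_def \<tau>'_def)
    also have "\<dots> = (\<Prod>k<N * d. f k)"
      by (rule prod_lessThan_mult_split)
    finally show ?thesis .
  qed
  with lim_lhs have "(\<lambda>N. \<Prod>j<a. \<Prod>l<d. \<Prod>m<N. 1 - e (z j l + of_nat m * \<tau>))
      \<longlonglongrightarrow> varpi (of_real y * \<tau>' - of_real x) \<tau>'"
    by simp
  moreover have "(\<lambda>N. \<Prod>j<a. \<Prod>l<d. \<Prod>m<N. 1 - e (z j l + of_nat m * \<tau>))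
      \<longlonglongrightarrow> (\<Prod>j<a. \<Prod>l<d. varpi (z j l) \<tau>)"
    using assms by (intro tendsto_prod varpi_partial_products_tendsto)
  ultimately show ?thesis
    unfolding z_def by (rule LIMSEQ_unique)
qed

lemma matrix_inv_matM:
  assumes "a \<noteq> 0" "d \<noteq> 0"
  shows "matrix_inv (matM a b d) =
    vector [vector [1 / of_int a, - of_int b / (of_int a * of_int d)], vector [0, 1 / of_int d]]"
    (is "_ = ?B")
proof -
  have right_inv: "matM a b d ** ?B = mat 1" and left_inv: "?B ** matM a b d = mat 1"
    using assms
    by (auto simp: vec_eq_iff matrix_matrix_mult_def forall_2 sum_2 matM_def mat_def field_simps)
  show ?thesis
    unfolding matrix_inv_def
  proof (rule some_equality)
    fix C
    assume "matM a b d ** C = mat 1 \<and> C ** matM a b d = mat 1"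
    then have "?B ** (matM a b d ** C) = ?B"
      by (simp add: matrix_mul_rid)
    then show "C = ?B"
      using left_inv by (simp add: matrix_mul_assoc matrix_mul_lid)
  qed (use right_inv left_inv in blast)
qed

lemma varpi_s_matrix_inv_matM:
  assumes "a \<noteq> 0" "d \<noteq> 0"
  shows "varpi_s (matrix_inv (matM a b d) *v vector [x, y]) \<tau> =
    varpi (of_real (y / of_int d) * \<tau> - of_real (x / of_int a - of_int b * y / (of_int a * of_int d))) \<tau>"
  using assms by (simp add: varpi_s_def matrix_inv_matM matrix_vector_mult_def sum_2 field_simps)

lemma varpi_s_matM_transform:
  fixes a b d :: int and x y :: real and \<tau> :: complex
  assumes "a > 0" "d > 0" "Im \<tau> > 0"
  shows "varpi_s (vector [x, y]) ((of_int a * \<tau> + of_int b) / of_int d) =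
    (\<Prod>j<nat a. \<Prod>l<nat d. varpi_s (matrix_inv (matM a b d) *v vector [real j + x, real l + y]) \<tau>)"
proof -
  define A D where "A = nat a" and "D = nat d"
  have a: "a = int A" and d: "d = int D" and "A > 0" "D > 0"
    using assms by (auto simp: A_def D_def)
  define \<tau>' where "\<tau>' = (of_nat A * \<tau> + of_int b) / of_nat D"
  have "varpi_s (vector [x, y]) \<tau>' = varpi (of_real y * \<tau>' - of_real x) \<tau>'"
    by (simp add: varpi_s_def)
  also have "\<dots> = (\<Prod>j<A. \<Prod>l<D. varpi (of_real ((real l + y) / real D) * \<tau>
      - of_real ((real j + x) / real A - of_int b * (real l + y) / (real A * real D))) \<tau>)"
    unfolding \<tau>'_def using \<open>A > 0\<close> \<open>D > 0\<close> \<open>Im \<tau> > 0\<close> by (rule varpi_transform_eq_prod)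
  also have "\<dots> = (\<Prod>j<A. \<Prod>l<D. varpi_s (matrix_inv (matM a b d) *v vector [real j + x, real l + y]) \<tau>)"
    using \<open>A > 0\<close> \<open>D > 0\<close> by (simp add: varpi_s_matrix_inv_matM a d)
  finally show ?thesis
    by (simp add: \<tau>'_def a d)
qed

theorem proposition4p45:
  fixes r1 r2 :: rat and a b d :: int and \<tau> :: complex
  assumes "0 \<le> b" and "b < a" and "d \<ge> 1" and "Im \<tau> > 0"
  shows "varpi_s (vector [of_rat r1, of_rat r2]) ((of_int a * \<tau> + of_int b) / of_int d) =
    (\<Prod>j<nat a. \<Prod>l<nat d.
       varpi_s (matrix_inv (matM a b d) *v vector [real j + of_rat r1, real l + of_rat r2]) \<tau>)"
  using assms by (intro varpi_s_matM_transform) auto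

end
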